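(* Let $m,n\ge 1$, $A=[a_{ij}]$ an $m\times n$ matrix with entries in $\mathbb{R}\cup\{-\infty\}$, and $B=[b_{ji}]$ an $n\times m$ matrix with entries in $\mathbb{R}\cup\{+\infty\}$. Let $\lambda\in\mathbb{R}$ be an eigenvalue of the bipartite min-max-plus system $\mathcal{M}$ defined by $A,B$, let $A_\lambda=-\lambda\otimes A$, $B_\lambda=-\lambda\otimes B$, and define a sequence $y(l+1)=\mathcal{N}(y(l))$ from an initial state vector $y(0)$. Suppose $y(r)=y(s)$ for some integers $r>s\ge 0$ and let $v=y(s)\oplus y(s+1)\oplus\cdots\oplus y(r-1)$. If the iteration is restarted with $x^*(0)=v$ and $x^*(l+1)=\mathcal{N}(x^*(l))$, then $x^*(l+1)\ge x^*(l)$ (componentwise) for all $l=0,1,2,\dots$.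
   Context: Notation: $\epsilon=-\infty$, $\tau=+\infty$. For scalars, $r\oplus s=\max\{r,s\}$, $r\oplus' s=\min\{r,s\}$, $r\otimes s=r+s$; $\oplus$ of vectors is the componentwise maximum. For a scalar $\alpha\in\mathbb{R}$ and a matrix or vector $X$, $\alpha\otimes X$ adds $\alpha$ to every entry (infinite entries are unchanged). Max-plus product: $(A\otimes w)_i=\max_{1\le j\le n}(a_{ij}+w_j)$; min-plus product: $(B\otimes' u)_j=\min_{1\le i\le m}(b_{ji}+u_i)$. Convention for infinite sums: $-\infty+x=-\infty$ for $x\ne+\infty$, $+\infty+x=+\infty$ for $x\ne-\infty$, and in max-plus products $-\infty$ is absorbing while in min-plus products $+\infty$ is absorbing. For $v=\begin{pmatrix}u\\ w\end{pmatrix}$ ($u$ of length $m$, $w$ of length $n$): $\mathcal{M}(v)=\begin{pmatrix}A\otimes w\\ B\otimes' u\end{pmatrix}$ and $\mathcal{N}(v)=\begin{pmatrix}A_\lambda\otimes w\\ B_\lambda\otimes' u\end{pmatrix}$. A real number $\lambda$ is an eigenvalue of the system $x(l+1)=\mathcal{M}(x(l))$ if there exists $v\in\mathbb{R}^{m+n}$ with $\mathcal{M}(v)=\lambda\otimes v$. *)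

theory Defs
  imports "HOL-Library.Extended_Real"
begin

text \<open>Vectors of length m+n are functions nat => ereal; indices 0..m-1 hold u,
  indices m..m+n-1 hold w (entry w_j is at index m+j). Matrices are
  A :: nat => nat => ereal (A i j, i<m, j<n) and B :: nat => nat => ereal (B j i, j<n, i<m).\<close>

definition mp_times :: "ereal \<Rightarrow> ereal \<Rightarrow> ereal" where
  "mp_times a x = (if a = -\<infinity> \<or> x = -\<infinity> then -\<infinity> else a + x)"

definition minp_times :: "ereal \<Rightarrow> ereal \<Rightarrow> ereal" where
  "minp_times b x = (if b = \<infinity> \<or> x = \<infinity> then \<infinity> else b + x)"

definition bmap :: "nat \<Rightarrow> nat \<Rightarrow> (nat \<Rightarrow> nat \<Rightarrow> ereal) \<Rightarrow> (nat \<Rightarrow> nat \<Rightarrow> ereal)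
    \<Rightarrow> (nat \<Rightarrow> ereal) \<Rightarrow> (nat \<Rightarrow> ereal)" where
  "bmap m n A B v = (\<lambda>k.
     if k < m then Max ((\<lambda>j. mp_times (A k j) (v (m + j))) ` {..<n})
     else if k < m + n then Min ((\<lambda>i. minp_times (B (k - m) i) (v i)) ` {..<m})
     else 0)"

definition scal_mat :: "real \<Rightarrow> (nat \<Rightarrow> nat \<Rightarrow> ereal) \<Rightarrow> (nat \<Rightarrow> nat \<Rightarrow> ereal)" where
  "scal_mat \<alpha> X = (\<lambda>i j. X i j + ereal \<alpha>)"

definition is_eigenvalue :: "nat \<Rightarrow> nat \<Rightarrow> (nat \<Rightarrow> nat \<Rightarrow> ereal) \<Rightarrow> (nat \<Rightarrow> nat \<Rightarrow> ereal)
    \<Rightarrow> real \<Rightarrow> bool" where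
  "is_eigenvalue m n A B lam \<longleftrightarrow>
     (\<exists>v :: nat \<Rightarrow> real. \<forall>k < m + n. bmap m n A B (\<lambda>k. ereal (v k)) k = ereal (lam + v k))"

end

theory Submission
  imports Defs
begin

text \<open>Because \<open>y(r) = y(s)\<close>, the vectors \<open>y(s), \<dots>, y(r-1)\<close> are, up to order, the
  images \<open>\<N>(y(s)), \<dots>, \<N>(y(r-1))\<close>; each of these lies below \<open>\<N>(v)\<close>, hence so does their
  maximum \<open>v\<close>. From \<open>v \<le> \<N>(v)\<close> monotonicity propagates \<open>x\<^sup>*(l) \<le> x\<^sup>*(l+1)\<close> along the orbit.\<close>

lemma mp_times_mono: "x \<le> y \<Longrightarrow> mp_times a x \<le> mp_times a y"
  unfolding mp_times_def by (cases a; cases x; cases y) auto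

lemma minp_times_mono: "x \<le> y \<Longrightarrow> minp_times a x \<le> minp_times a y"
  unfolding minp_times_def by (cases a; cases x; cases y) auto

lemma Max_image_mono:
  fixes f g :: "'a \<Rightarrow> 'b::linorder"
  assumes "finite I" and "\<And>i. i \<in> I \<Longrightarrow> f i \<le> g i"
  shows "Max (f ` I) \<le> Max (g ` I)"
proof (cases "I = {}")
  case False
  show ?thesis
  proof (rule Max.boundedI)
    fix a assume "a \<in> f ` I"
    then show "a \<le> Max (g ` I)"
      using assms by (metis Max_ge finite_imageI imageE image_eqI order_trans)
  qed (use assms False in auto)
qed simp

lemma Min_image_mono:
  fixes f g :: "'a \<Rightarrow> 'b::linorder"
  assumes "finite I" and "\<And>i. i \<in> I \<Longrightarrow> f i \<le> g i"
  shows "Min (f ` I) \<le> Min (g ` I)"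
proof (cases "I = {}")
  case False
  show ?thesis
  proof (rule Min.boundedI)
    fix b assume "b \<in> g ` I"
    then show "Min (f ` I) \<le> b"
      using assms by (metis Min_le finite_imageI imageE image_eqI order_trans)
  qed (use assms False in auto)
qed simp

lemma bmap_mono:
  assumes "\<forall>k<m+n. u k \<le> v k"
  shows "bmap m n A B u k \<le> bmap m n A B v k"
  using assms unfolding bmap_def
  by (auto intro!: Max_image_mono Min_image_mono mp_times_mono minp_times_mono)

lemma Max_cycle_le_map:
  fixes N :: "('i \<Rightarrow> 'b::linorder) \<Rightarrow> 'i \<Rightarrow> 'b"
  assumes mono: "\<And>u w. \<forall>k\<in>K. u k \<le> w k \<Longrightarrow> \<forall>k\<in>K. N u k \<le> N w k"
    and orbit: "\<forall>l. y (Suc l) = N (y l)"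
    and "s < r" and cycle: "\<forall>k\<in>K. y r k = y s k"
  defines "v \<equiv> \<lambda>k. Max ((\<lambda>l. y l k) ` {s..<r})"
  shows "\<forall>k\<in>K. v k \<le> N v k"
proof
  fix k assume k: "k \<in> K"
  have "Suc ` {s..<r} = insert r {Suc s..<r}" and "{s..<r} = insert s {Suc s..<r}"
    using \<open>s < r\<close> by auto
  then have "(\<lambda>l. y (Suc l) k) ` {s..<r} = (\<lambda>l. y l k) ` {s..<r}"
    using cycle k by (simp add: image_image [symmetric, of "\<lambda>l. y l k" Suc])
  then have "v k = Max ((\<lambda>l. N (y l) k) ` {s..<r})"
    by (simp add: v_def orbit)
  also have "\<dots> \<le> N v k"
  proof (rule Max.boundedI)
    fix a assume "a \<in> (\<lambda>l. N (y l) k) ` {s..<r}"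
    then obtain l where l: "l \<in> {s..<r}" and a: "a = N (y l) k" by auto
    have "\<forall>k\<in>K. y l k \<le> v k"
      using l by (auto simp: v_def intro: Max_ge)
    then show "a \<le> N v k" using mono k a by blast
  qed (use \<open>s < r\<close> in auto)
  finally show "v k \<le> N v k" .
qed

lemma orbit_increasing_from_le_map:
  fixes N :: "('i \<Rightarrow> 'b::order) \<Rightarrow> 'i \<Rightarrow> 'b"
  assumes mono: "\<And>u w. \<forall>k\<in>K. u k \<le> w k \<Longrightarrow> \<forall>k\<in>K. N u k \<le> N w k"
    and orbit: "\<forall>l. x (Suc l) = N (x l)"
    and start: "\<forall>k\<in>K. x 0 k \<le> N (x 0) k"
  shows "\<forall>k\<in>K. x l k \<le> x (Suc l) k"
proof (induction l)
  case 0
  then show ?case using start orbit by simp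
next
  case (Suc l)
  then show ?case using mono orbit by simp
qed

theorem lemma1:
  fixes m n :: nat and A B :: "nat \<Rightarrow> nat \<Rightarrow> ereal" and lam :: real
    and y0 :: "nat \<Rightarrow> real" and y xs :: "nat \<Rightarrow> nat \<Rightarrow> ereal" and r s :: nat
  assumes "m \<ge> 1" and "n \<ge> 1"
    and "\<forall>i<m. \<forall>j<n. A i j \<noteq> \<infinity>"
    and "\<forall>j<n. \<forall>i<m. B j i \<noteq> -\<infinity>"
    and "is_eigenvalue m n A B lam"
    and "y 0 = (\<lambda>k. ereal (y0 k))"
    and "\<forall>l. y (Suc l) = bmap m n (scal_mat (-lam) A) (scal_mat (-lam) B) (y l)"
    and "s < r"
    and "\<forall>k<m+n. y r k = y s k"
    and "xs 0 = (\<lambda>k. Max ((\<lambda>l. y l k) ` {s..<r}))"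
    and "\<forall>l. xs (Suc l) = bmap m n (scal_mat (-lam) A) (scal_mat (-lam) B) (xs l)"
  shows "\<forall>l. \<forall>k<m+n. xs (Suc l) k \<ge> xs l k"
proof -
  let ?N = "bmap m n (scal_mat (-lam) A) (scal_mat (-lam) B)"
  have mono: "\<forall>k\<in>{..<m+n}. ?N u k \<le> ?N w k" if "\<forall>k\<in>{..<m+n}. u k \<le> w k" for u w
    using that by (simp add: bmap_mono)
  have "\<forall>k\<in>{..<m+n}. xs 0 k \<le> ?N (xs 0) k"
    using Max_cycle_le_map[of "{..<m+n}" ?N y s r] mono assms(7-10) by simp
  then have "\<forall>k\<in>{..<m+n}. xs l k \<le> xs (Suc l) k" for l
    using orbit_increasing_from_le_map[of "{..<m+n}" ?N xs] mono assms(11) by blast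
  then show ?thesis by simp
qed

end
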